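(* Let $\mathcal{F}\subseteq\mathcal{B}_n$, let $q$ be a positive integer, let $\varepsilon>0$, let $\mathcal{T}$ be a $q$-strong $1$-marked chain family from $\mathcal{F}$, and let $\mathcal{M}=\mathcal{T}[q]$. For $i\in[q]$ and $\chi\in\mathcal{C}$ let $\mathcal{L}^i(\mathcal{M},\chi)$ be the set of $F\in\mathcal{F}$ for which there is $(\chi,Q)\in\mathcal{M}$ such that $F$ is the $i$-th member of $Q$, and let $\mathcal{L}^i(\mathcal{M})=\bigcup_{\chi\in\mathcal{C}}\mathcal{L}^i(\mathcal{M},\chi)$. If $|\mathcal{T}|\geq\varepsilon\, n!$, then for each $i\in[q]$, $$|\mathcal{L}^i(\mathcal{M})|\geq\frac{\varepsilon}{q}\min_{F\in\mathcal{F}}\binom{n}{|F|}.$$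
   Context: $\mathcal{B}_n$ is the family of all subsets of $[n]$. $\mathcal{C}$ is the set of all full chains $\emptyset=C_0\subsetneq C_1\subsetneq\cdots\subsetneq C_n=[n]$ (identified with their sets of members). A $1$-marked chain from $\mathcal{F}$ is a pair $(\chi,F)$ with $\chi\in\mathcal{C}$, $F\in\mathcal{F}\cap\chi$; for a family $\mathcal{T}$ of such pairs, $\mathcal{T}(\chi)=\{F:(\chi,F)\in\mathcal{T}\}$, and $\mathcal{T}$ is $q$-strong if $|\mathcal{T}(\chi)|\ge q$ whenever $\mathcal{T}(\chi)\neq\emptyset$. A $q$-chain is a tuple $(F_1,\dots,F_q)$ with $F_1\supsetneq F_2\supsetneq\cdots\supsetneq F_q$; its $i$-th member is $F_i$. A $q$-marked chain is a pair $(\chi,Q)$ with $\chi\in\mathcal{C}$ and $Q$ a $q$-chain all of whose members lie on $\chi$. The $q$-th power of $\mathcal{T}$ is $\mathcal{T}[q]=\{(\chi,Q): Q \text{ a } q\text{-element subset of }\mathcal{T}(\chi)\}$, where each such $Q$ is viewed as a $q$-chain ordered by decreasing size. *)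

theory Defs
  imports Complex_Main
begin

text \<open>Ground set [n] is rendered as {0..<n}.  A full chain is identified with its set of members.\<close>

definition full_chain :: "nat \<Rightarrow> nat set set \<Rightarrow> bool" where
  "full_chain n \<chi> \<longleftrightarrow> (\<exists>C :: nat \<Rightarrow> nat set. C 0 = {} \<and> C n = {0..<n}
      \<and> (\<forall>i<n. C i \<subset> C (Suc i)) \<and> \<chi> = C ` {0..n})"

definition full_chains :: "nat \<Rightarrow> nat set set set" where
  "full_chains n = {\<chi>. full_chain n \<chi>}"

definition marked_family :: "nat \<Rightarrow> nat set set \<Rightarrow> (nat set set \<times> nat set) set \<Rightarrow> bool" where
  "marked_family n \<F> T \<longleftrightarrow> (\<forall>(\<chi>, F) \<in> T. \<chi> \<in> full_chains n \<and> F \<in> \<F> \<and> F \<in> \<chi>)"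

definition Tsec :: "(nat set set \<times> nat set) set \<Rightarrow> nat set set \<Rightarrow> nat set set" where
  "Tsec T \<chi> = {F. (\<chi>, F) \<in> T}"

definition q_strong :: "nat \<Rightarrow> (nat set set \<times> nat set) set \<Rightarrow> bool" where
  "q_strong q T \<longleftrightarrow> (\<forall>\<chi>. Tsec T \<chi> \<noteq> {} \<longrightarrow> card (Tsec T \<chi>) \<ge> q)"

text \<open>A q-chain is a list F_1 \<supset> F_2 \<supset> ... \<supset> F_q (strictly decreasing); its i-th member is the list entry at index i-1.\<close>
definition q_chain :: "nat \<Rightarrow> nat set list \<Rightarrow> bool" where
  "q_chain q Q \<longleftrightarrow> length Q = q \<and> sorted_wrt (\<lambda>A B. B \<subset> A) Q"

text \<open>The q-th power T[q]: q-element subsets of T(\<chi>), viewed as q-chains ordered by decreasing size.\<close>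
definition power :: "(nat set set \<times> nat set) set \<Rightarrow> nat \<Rightarrow> (nat set set \<times> nat set list) set" where
  "power T q = {(\<chi>, Q). q_chain q Q \<and> set Q \<subseteq> Tsec T \<chi>}"

definition Lchi :: "nat set set \<Rightarrow> nat \<Rightarrow> (nat set set \<times> nat set list) set \<Rightarrow> nat set set \<Rightarrow> nat set set" where
  "Lchi \<F> i M \<chi> = {F \<in> \<F>. \<exists>Q. (\<chi>, Q) \<in> M \<and> Q ! (i - 1) = F}"

definition Lall :: "nat \<Rightarrow> nat set set \<Rightarrow> nat \<Rightarrow> (nat set set \<times> nat set list) set \<Rightarrow> nat set set" where
  "Lall n \<F> i M = (\<Union>\<chi> \<in> full_chains n. Lchi \<F> i M \<chi>)"

end

(*
  List the members of T(chi) decreasingly as s_0, ..., s_(m-1), where m >= q.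
  Every s_t with i-1 <= t <= m-q+i-1 is the i-th member of the q-chain of consecutive
  members s_(t-i+1), ..., s_(t-i+q), so chi contributes at least m-q+1 >= m/q sets to
  L^i(M).  Double counting chain--set incidences gives |T| <= q * sum over F in L^i(M) of the
  number of full chains through F.  A full chain is the chain of prefixes of a permutation of
  [n], so F lies on |F|! (n-|F|)! = n! / binom(n,|F|) of them, which is at most
  n! / min_F binom(n,|F|).
*)
theory Submission
  imports Defs "HOL-Combinatorics.Multiset_Permutations"
begin

definition prefix_chain :: "'a list \<Rightarrow> 'a set set" where
  "prefix_chain xs = (\<lambda>j. set (take j xs)) ` {0..length xs}"

lemma strict_chain_eq_prefixes:
  fixes C :: "nat \<Rightarrow> 'a set"
  assumes "C 0 = {}" "finite (C n)" "card (C n) \<le> n" "\<forall>j<n. C j \<subset> C (Suc j)"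
  shows "\<exists>xs. length xs = n \<and> distinct xs \<and> (\<forall>j\<le>n. C j = set (take j xs))"
  using assms(2-4)
proof (induction n)
  case 0
  then show ?case using assms(1) by simp
next
  case (Suc n)
  have step: "C n \<subset> C (Suc n)" using Suc.prems(3) by simp
  then have "finite (C n)" using Suc.prems(1) finite_subset by blast
  moreover have card_less: "card (C n) < card (C (Suc n))"
    using step Suc.prems(1) by (rule psubset_card_mono[rotated])
  ultimately obtain xs where xs: "length xs = n" "distinct xs" "\<forall>j\<le>n. C j = set (take j xs)"
    using Suc by auto
  have Cn: "C n = set xs" using xs by (metis order_refl take_all)
  then have "card (C (Suc n) - C n) = 1"
    using step card_less Suc.prems(1,2) xs(1,2) distinct_card[of xs]
    by (simp add: card_Diff_subset psubset_imp_subset finite_subset)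
  then obtain x where x: "C (Suc n) - C n = {x}" by (auto simp: card_1_singleton_iff)
  have "\<forall>j\<le>Suc n. C j = set (take j (xs @ [x]))"
  proof (intro allI impI)
    fix j assume "j \<le> Suc n"
    then consider "j \<le> n" | "j = Suc n" by linarith
    then show "C j = set (take j (xs @ [x]))"
      by cases (use xs x step Cn in auto)
  qed
  moreover have "distinct (xs @ [x])" using xs(2) x Cn by auto
  ultimately show ?case using xs(1) by (metis length_append_singleton)
qed

lemma full_chainsE:
  assumes "\<chi> \<in> full_chains n"
  obtains xs where "xs \<in> permutations_of_set {0..<n}" "\<chi> = prefix_chain xs"
proof -
  obtain C where C: "C 0 = {}" "C n = {0..<n}" "\<forall>j<n. C j \<subset> C (Suc j)" "\<chi> = C ` {0..n}"
    using assms unfolding full_chains_def full_chain_def by blast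
  then obtain xs where xs: "length xs = n" "distinct xs" "\<forall>j\<le>n. C j = set (take j xs)"
    using strict_chain_eq_prefixes[of C n] by auto
  have "set xs = {0..<n}" using xs(1,3) C(2) by (metis order_refl take_all)
  moreover have "\<chi> = prefix_chain xs"
    unfolding prefix_chain_def C(4) xs(1) using xs(3) by (intro image_cong) auto
  ultimately show ?thesis using that xs(2) by (simp add: permutations_of_set_def)
qed

lemma prefix_chain_subset: "A \<in> prefix_chain xs \<Longrightarrow> A \<subseteq> set xs"
  by (auto simp: prefix_chain_def dest: in_set_takeD)

lemma chain_subset_prefix_chain: "chain\<^sub>\<subseteq> (prefix_chain xs)"
proof -
  have "set (take j xs) \<subseteq> set (take k xs) \<or> set (take k xs) \<subseteq> set (take j xs)" for j k
    by (cases "j \<le> k") (simp_all add: set_take_subset_set_take)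
  then show ?thesis by (auto simp: chain_subset_def prefix_chain_def)
qed

lemma prefix_chain_member_eq_take_card:
  assumes "distinct xs" "A \<in> prefix_chain xs"
  shows "A = set (take (card A) xs)"
proof -
  obtain j where "j \<le> length xs" "A = set (take j xs)"
    using assms(2) by (auto simp: prefix_chain_def)
  moreover then have "card A = j" using assms(1) by (simp add: distinct_card)
  ultimately show ?thesis by simp
qed

lemma full_chain_subset_Pow:
  assumes "\<chi> \<in> full_chains n"
  shows "\<chi> \<subseteq> Pow {0..<n}"
proof -
  obtain xs where "xs \<in> permutations_of_set {0..<n}" "\<chi> = prefix_chain xs"
    using assms by (rule full_chainsE)
  then show ?thesis by (auto simp: permutations_of_set_def dest: prefix_chain_subset)
qed

lemma chain_subset_full_chain: "\<chi> \<in> full_chains n \<Longrightarrow> chain\<^sub>\<subseteq> \<chi>"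
  by (elim full_chainsE) (simp add: chain_subset_prefix_chain)

lemma finite_full_chain: "\<chi> \<in> full_chains n \<Longrightarrow> finite \<chi>"
  by (rule finite_subset[OF full_chain_subset_Pow]) simp_all

lemma finite_full_chains: "finite (full_chains n)"
proof (rule finite_subset)
  show "full_chains n \<subseteq> Pow (Pow {0..<n})" using full_chain_subset_Pow by blast
qed simp

lemma card_permutations_with_prefix_set:
  assumes "finite A" "B \<subseteq> A"
  shows "card {xs \<in> permutations_of_set A. set (take (card B) xs) = B}
           = fact (card B) * fact (card A - card B)"
proof -
  let ?split = "permutations_of_set B \<times> permutations_of_set (A - B)"
  let ?P = "{xs \<in> permutations_of_set A. set (take (card B) xs) = B}"
  have B: "finite B" using assms finite_subset by blast
  have len: "length ys = card B" if "ys \<in> permutations_of_set B" for ys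
    using that by (auto simp: permutations_of_set_def distinct_card)
  have inj: "inj_on (\<lambda>(ys, zs). ys @ zs) ?split"
  proof (rule inj_onI)
    fix u v assume "u \<in> ?split" "v \<in> ?split" "(\<lambda>(ys, zs). ys @ zs) u = (\<lambda>(ys, zs). ys @ zs) v"
    then show "u = v" by (cases u; cases v) (simp add: append_eq_append_conv len)
  qed
  have image: "(\<lambda>(ys, zs). ys @ zs) ` ?split = ?P"
  proof
    show "(\<lambda>(ys, zs). ys @ zs) ` ?split \<subseteq> ?P"
    proof
      fix xs assume "xs \<in> (\<lambda>(ys, zs). ys @ zs) ` ?split"
      then obtain ys zs where xs: "xs = ys @ zs"
        and ys: "ys \<in> permutations_of_set B" and zs: "zs \<in> permutations_of_set (A - B)"
        by auto
      then have "take (card B) xs = ys" using len by simp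
      then show "xs \<in> ?P" using xs ys zs assms(2) by (auto simp: permutations_of_set_def)
    qed
  next
    show "?P \<subseteq> (\<lambda>(ys, zs). ys @ zs) ` ?split"
    proof
      fix xs assume xs: "xs \<in> ?P"
      let ?ys = "take (card B) xs" and ?zs = "drop (card B) xs"
      have "distinct (?ys @ ?zs)" "set (?ys @ ?zs) = A" "set ?ys = B"
        using xs by (simp_all add: permutations_of_set_def)
      then have "distinct ?ys" "distinct ?zs" "set ?zs = A - B"
        unfolding distinct_append set_append by blast+
      then have "(?ys, ?zs) \<in> ?split"
        using \<open>set ?ys = B\<close> by (simp add: permutations_of_set_def)
      then show "xs \<in> (\<lambda>(ys, zs). ys @ zs) ` ?split"
        by (intro image_eqI[of _ _ "(?ys, ?zs)"]) simp_all
    qed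
  qed
  have "card ?P = card ?split"
    unfolding image[symmetric] by (rule card_image[OF inj])
  then show ?thesis
    using assms B by (simp add: card_cartesian_product card_Diff_subset)
qed

lemma card_full_chains_containing_le:
  assumes "F \<subseteq> {0..<n}"
  shows "card {\<chi> \<in> full_chains n. F \<in> \<chi>} \<le> fact (card F) * fact (n - card F)"
proof -
  let ?P = "{xs \<in> permutations_of_set {0..<n}. set (take (card F) xs) = F}"
  have "{\<chi> \<in> full_chains n. F \<in> \<chi>} \<subseteq> prefix_chain ` ?P"
  proof
    fix \<chi> assume "\<chi> \<in> {\<chi> \<in> full_chains n. F \<in> \<chi>}"
    then obtain xs where xs: "xs \<in> permutations_of_set {0..<n}" "\<chi> = prefix_chain xs" "F \<in> \<chi>"
      by (auto elim: full_chainsE)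
    then have "F = set (take (card F) xs)"
      by (intro prefix_chain_member_eq_take_card) (auto simp: permutations_of_set_def)
    then show "\<chi> \<in> prefix_chain ` ?P" using xs by auto
  qed
  then have "card {\<chi> \<in> full_chains n. F \<in> \<chi>} \<le> card (prefix_chain ` ?P)"
    by (intro card_mono finite_imageI) auto
  also have "\<dots> \<le> card ?P" by (intro card_image_le) auto
  also have "\<dots> = fact (card F) * fact (n - card F)"
    using card_permutations_with_prefix_set[OF _ assms] by simp
  finally show ?thesis .
qed

lemma finite_chain_sorted_decreasing:
  fixes S :: "'a set set"
  assumes "finite S" "\<forall>A\<in>S. finite A" "chain\<^sub>\<subseteq> S"
  obtains ls where "set ls = S" "length ls = card S" "sorted_wrt (\<lambda>A B. B \<subset> A) ls"
proof -
  have comparable: "A \<subseteq> B \<or> B \<subseteq> A" if "A \<in> S" "B \<in> S" for A B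
    using assms(3) that by (auto simp: chain_subset_def)
  have "inj_on card S"
  proof (rule inj_onI)
    fix A B assume "A \<in> S" "B \<in> S" "card A = card B"
    then show "A = B" using comparable assms(2) by (metis card_subset_eq)
  qed
  then interpret folding_insort_key "(\<le>)" "(<)" S card by unfold_locales
  obtain ls where ls: "sorted_wrt (<) (map card ls)" "set ls = S" "length ls = card S"
    using finite_set_strict_sorted[OF order_refl assms(1)] by blast
  have "sorted_wrt (\<lambda>A B. A \<subset> B) ls"
    using ls(1) unfolding sorted_wrt_map
  proof (rule sorted_wrt_mono_rel[rotated])
    fix A B assume "A \<in> set ls" "B \<in> set ls" "card A < card B"
    then show "A \<subset> B" using comparable ls(2) assms(2) by (metis card_mono leD psubsetI)
  qed
  then have "sorted_wrt (\<lambda>A B. B \<subset> A) (rev ls)" by (simp add: sorted_wrt_rev)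
  then show ?thesis using ls by (intro that[of "rev ls"]) simp_all
qed

lemma sorted_wrt_window:
  assumes "sorted_wrt R ls" "k < q" "k \<le> t" "t + q \<le> length ls + k"
  obtains Q where "length Q = q" "sorted_wrt R Q" "set Q \<subseteq> set ls" "Q ! k = ls ! t"
proof
  let ?Q = "take q (drop (t - k) ls)"
  show "length ?Q = q" "sorted_wrt R ?Q" "set ?Q \<subseteq> set ls" "?Q ! k = ls ! t"
    using assms by (auto simp: sorted_wrt_take sorted_wrt_drop dest: in_set_takeD in_set_dropD)
qed

lemma Lchi_power_subset_Tsec:
  assumes "i \<in> {1..q}"
  shows "Lchi \<F> i (power T q) \<chi> \<subseteq> Tsec T \<chi>"
proof
  fix F assume "F \<in> Lchi \<F> i (power T q) \<chi>"
  then obtain Q where "q_chain q Q" "set Q \<subseteq> Tsec T \<chi>" "Q ! (i - 1) = F"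
    by (auto simp: Lchi_def power_def)
  then show "F \<in> Tsec T \<chi>" using assms by (auto simp: q_chain_def)
qed

lemma card_Tsec_le_card_Lchi:
  assumes "Tsec T \<chi> \<subseteq> \<F>" "finite (Tsec T \<chi>)" "\<forall>A\<in>Tsec T \<chi>. finite A" "chain\<^sub>\<subseteq> (Tsec T \<chi>)"
    and "q \<le> card (Tsec T \<chi>)" "i \<in> {1..q}"
  shows "card (Tsec T \<chi>) \<le> q * card (Lchi \<F> i (power T q) \<chi>)"
proof -
  let ?m = "card (Tsec T \<chi>)"
  obtain ls where ls: "set ls = Tsec T \<chi>" "length ls = ?m" "sorted_wrt (\<lambda>A B. B \<subset> A) ls"
    using finite_chain_sorted_decreasing assms(2-4) by blast
  have "(!) ls ` {i - 1..?m - q + (i - 1)} \<subseteq> Lchi \<F> i (power T q) \<chi>"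
  proof
    fix F assume "F \<in> (!) ls ` {i - 1..?m - q + (i - 1)}"
    then obtain t where t: "i - 1 \<le> t" "t \<le> ?m - q + (i - 1)" "F = ls ! t" by auto
    have k: "i - 1 < q" and window_fits: "t + q \<le> length ls + (i - 1)"
      using t ls(2) assms(5,6) by auto
    obtain Q where Q: "length Q = q" "sorted_wrt (\<lambda>A B. B \<subset> A) Q"
        "set Q \<subseteq> set ls" "Q ! (i - 1) = ls ! t"
      by (rule sorted_wrt_window[OF ls(3) k t(1) window_fits])
    have "t < length ls" using k window_fits by linarith
    then have "F \<in> \<F>" using t(3) ls(1) assms(1) nth_mem by blast
    with Q ls(1) t(3) show "F \<in> Lchi \<F> i (power T q) \<chi>"
      by (auto simp: Lchi_def power_def q_chain_def)
  qed
  moreover have "distinct ls" using ls(1,2) by (simp add: card_distinct)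
  then have "card ((!) ls ` {i - 1..?m - q + (i - 1)}) = ?m - q + 1"
    using ls(2) assms(5,6) by (subst card_image) (auto intro!: inj_on_nth)
  moreover have "finite (Lchi \<F> i (power T q) \<chi>)"
    using Lchi_power_subset_Tsec[OF assms(6)] assms(2) by (rule finite_subset)
  ultimately have "?m - q + 1 \<le> card (Lchi \<F> i (power T q) \<chi>)"
    by (metis card_mono)
  moreover have "?m \<le> q * (?m - q + 1)"
  proof -
    have "?m = (?m - q) + q" using assms(5) by simp
    also have "\<dots> \<le> q * (?m - q) + q" using assms(6) by simp
    also have "\<dots> = q * (?m - q + 1)" by simp
    finally show ?thesis .
  qed
  ultimately show ?thesis by (meson le_trans mult_le_mono2)
qed

lemma Lall_subset: "Lall n \<F> i M \<subseteq> \<F>"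
  by (auto simp: Lall_def Lchi_def)

lemma Tsec_subset: "marked_family n \<F> T \<Longrightarrow> Tsec T \<chi> \<subseteq> \<F> \<inter> \<chi>"
  by (auto simp: marked_family_def Tsec_def)

lemma card_Tsec_le_card_Lall_in_chain:
  assumes "marked_family n \<F> T" "q_strong q T" "i \<in> {1..q}" "\<chi> \<in> full_chains n"
  shows "card (Tsec T \<chi>) \<le> q * card {F \<in> Lall n \<F> i (power T q). F \<in> \<chi>}"
proof (cases "Tsec T \<chi> = {}")
  case False
  have sec: "Tsec T \<chi> \<subseteq> \<F>" "Tsec T \<chi> \<subseteq> \<chi>"
    using Tsec_subset[OF assms(1)] by auto
  have \<chi>: "\<chi> \<subseteq> Pow {0..<n}" "chain\<^sub>\<subseteq> \<chi>" "finite \<chi>"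
    using assms(4) by (simp_all add: full_chain_subset_Pow chain_subset_full_chain finite_full_chain)
  have "card (Tsec T \<chi>) \<le> q * card (Lchi \<F> i (power T q) \<chi>)"
  proof (rule card_Tsec_le_card_Lchi[OF sec(1) _ _ _ _ assms(3)])
    show "finite (Tsec T \<chi>)" using sec(2) \<chi>(3) by (rule finite_subset)
    show "\<forall>A\<in>Tsec T \<chi>. finite A" using sec(2) \<chi>(1) by (auto intro: finite_subset[of _ "{0..<n}"])
    show "chain\<^sub>\<subseteq> (Tsec T \<chi>)" using \<chi>(2) sec(2) by (auto simp: chain_subset_def)
    show "q \<le> card (Tsec T \<chi>)" using assms(2) False by (simp add: q_strong_def)
  qed
  also have "\<dots> \<le> q * card {F \<in> Lall n \<F> i (power T q). F \<in> \<chi>}"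
  proof (intro mult_le_mono2 card_mono)
    show "finite {F \<in> Lall n \<F> i (power T q). F \<in> \<chi>}" using \<chi>(3) by simp
    show "Lchi \<F> i (power T q) \<chi> \<subseteq> {F \<in> Lall n \<F> i (power T q). F \<in> \<chi>}"
      using Lchi_power_subset_Tsec[OF assms(3), of \<F> T \<chi>] sec(2) assms(4) by (auto simp: Lall_def)
  qed
  finally show ?thesis .
qed simp

lemma card_le_q_sum_full_chains_containing_Lall:
  assumes "marked_family n \<F> T" "q_strong q T" "i \<in> {1..q}"
  shows "card T \<le> q * (\<Sum>F\<in>Lall n \<F> i (power T q). card {\<chi> \<in> full_chains n. F \<in> \<chi>})"
proof -
  let ?L = "Lall n \<F> i (power T q)"
  have "?L \<subseteq> Pow {0..<n}"
  proof
    fix F assume "F \<in> ?L"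
    then obtain \<chi> where "\<chi> \<in> full_chains n" "F \<in> Lchi \<F> i (power T q) \<chi>"
      by (auto simp: Lall_def)
    then show "F \<in> Pow {0..<n}"
      using Lchi_power_subset_Tsec[OF assms(3)] Tsec_subset[OF assms(1)] full_chain_subset_Pow
      by blast
  qed
  then have "finite ?L" by (rule finite_subset) simp
  have "T = Sigma (full_chains n) (Tsec T)"
    using assms(1) by (auto simp: marked_family_def Tsec_def)
  then have "card T = card (Sigma (full_chains n) (Tsec T))" by (rule arg_cong)
  also have "\<dots> = (\<Sum>\<chi>\<in>full_chains n. card (Tsec T \<chi>))"
  proof (rule card_SigmaI[OF finite_full_chains], rule ballI)
    fix \<chi> assume "\<chi> \<in> full_chains n"
    then have "finite \<chi>" by (rule finite_full_chain)
    then show "finite (Tsec T \<chi>)"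
      by (rule finite_subset[rotated]) (use Tsec_subset[OF assms(1)] in blast)
  qed
  also have "\<dots> \<le> (\<Sum>\<chi>\<in>full_chains n. q * card {F \<in> ?L. F \<in> \<chi>})"
    using card_Tsec_le_card_Lall_in_chain[OF assms] by (rule sum_mono)
  also have "\<dots> = q * (\<Sum>\<chi>\<in>full_chains n. card {F \<in> ?L. F \<in> \<chi>})"
    by (simp add: sum_distrib_left)
  also have "(\<Sum>\<chi>\<in>full_chains n. card {F \<in> ?L. F \<in> \<chi>})
      = (\<Sum>F\<in>?L. card {\<chi> \<in> full_chains n. F \<in> \<chi>})"
    using sum.swap_restrict[OF finite_full_chains[of n] \<open>finite ?L\<close>,
        of "\<lambda>_ _. 1 :: nat" "\<lambda>\<chi> F. F \<in> \<chi>"]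
    by simp
  finally show ?thesis .
qed

lemma sum_full_chains_containing_mult_Min_le:
  assumes "\<F> \<subseteq> Pow {0..<n}" "L \<subseteq> \<F>"
  shows "(\<Sum>F\<in>L. card {\<chi> \<in> full_chains n. F \<in> \<chi>}) * Min ((\<lambda>F. n choose card F) ` \<F>)
           \<le> card L * fact n"
proof -
  have "finite \<F>" using assms(1) by (rule finite_subset) simp
  have "card {\<chi> \<in> full_chains n. F \<in> \<chi>} * Min ((\<lambda>F. n choose card F) ` \<F>) \<le> fact n"
    if "F \<in> L" for F
  proof -
    have F: "F \<in> \<F>" "F \<subseteq> {0..<n}" using that assms by auto
    then have "card F \<le> n" using card_mono[of "{0..<n}" F] by simp
    have "card {\<chi> \<in> full_chains n. F \<in> \<chi>} * Min ((\<lambda>F. n choose card F) ` \<F>)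
        \<le> fact (card F) * fact (n - card F) * (n choose card F)"
      using card_full_chains_containing_le[OF F(2)] \<open>finite \<F>\<close> F(1) by (intro mult_le_mono) auto
    also have "\<dots> = fact n" using binomial_fact_lemma[OF \<open>card F \<le> n\<close>] .
    finally show ?thesis .
  qed
  then have "(\<Sum>F\<in>L. card {\<chi> \<in> full_chains n. F \<in> \<chi>} * Min ((\<lambda>F. n choose card F) ` \<F>))
      \<le> (\<Sum>F\<in>L. fact n)"
    by (rule sum_mono)
  then show ?thesis by (simp add: sum_distrib_right)
qed

theorem lemma4p3:
  fixes n q i :: nat and \<F> :: "nat set set" and \<epsilon> :: real
    and T :: "(nat set set \<times> nat set) set"
  assumes "\<F> \<subseteq> Pow {0..<n}"
    and "q > 0"
    and "\<epsilon> > 0"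
    and "marked_family n \<F> T"
    and "q_strong q T"
    and "real (card T) \<ge> \<epsilon> * real (fact n)"
    and "i \<in> {1..q}"
  shows "real (card (Lall n \<F> i (power T q)))
           \<ge> \<epsilon> / real q * real (Min ((\<lambda>F. n choose card F) ` \<F>))"
proof -
  let ?L = "Lall n \<F> i (power T q)"
  let ?N = "\<Sum>F\<in>?L. card {\<chi> \<in> full_chains n. F \<in> \<chi>}"
  let ?m = "Min ((\<lambda>F. n choose card F) ` \<F>)"
  have "real (card T) \<le> real (q * ?N)"
    using card_le_q_sum_full_chains_containing_Lall[OF assms(4,5,7)] by (simp only: of_nat_le_iff)
  then have count: "\<epsilon> * real (fact n) \<le> real q * real ?N"
    using assms(6) by (simp only: of_nat_mult)
  have weight: "real ?N * real ?m \<le> real (card ?L) * real (fact n)"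
    using sum_full_chains_containing_mult_Min_le[OF assms(1) Lall_subset]
    by (simp only: of_nat_mult[symmetric] of_nat_le_iff)
  have "\<epsilon> / q * ?m * real (fact n) = \<epsilon> * real (fact n) * ?m / q" by simp
  also have "\<dots> \<le> real q * real ?N * real ?m / real q"
    by (rule divide_right_mono[OF mult_right_mono[OF count]]) simp_all
  also have "\<dots> = real ?N * real ?m" using assms(2) by simp
  also have "\<dots> \<le> real (card ?L) * real (fact n)" by (fact weight)
  finally show ?thesis by (rule mult_right_le_imp_le) simp
qed

end
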